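(* Let $n\ge1$ and let $f=2x_1\cdots x_n\left(\sum_{i=1}^n b_ix_i+c\right)$ with $b_i\in\{0,1\}$, $c\in\{0,1\}$, and $b_j=1$ for some $j$. Let $K=\{j\mid b_j=1\}$. Then: (i) if $K=\{1,\dots,n\}$, then $f=2t_n$ or $f=2s_n$; (ii) if $1\le|K|<n$, then $2v_n\in C(f)$; (iii) if $1\le|K|<n$ and $|K|$ is even, then $C(f)=C(2v_n)$ or $C(f)=C(2v_n)\vee C(2r_n)$; (iv) if $1\le|K|<n$ and $|K|$ is odd, then $C(f)=C(2u_n)$ or $C(f)=C(2p_n)$.
   Context: All operations are on $\mathbb{Z}_8$; $\vee$ is the join in the lattice of clones on $\mathbb{Z}_8$. For an operation $f$, $C(f)$ denotes the clone generated by $f$ together with binary addition and all unary constant operations. For $n\ge1$: $r_n=x_1\cdots x_n$; $t_n=x_1\cdots x_n(x_1+\dots+x_n)$ if $n$ is even and $t_n=x_1\cdots x_n(x_1+\dots+x_n+1)$ if $n$ is odd; $s_n=x_1\cdots x_n(x_1+\dots+x_n)$ if $n$ is odd and $s_n=x_1\cdots x_n(x_1+\dots+x_n+1)$ if $n$ is even; $p_n=x_1^2x_2\cdots x_n$; $u_n=x_1\cdots x_n(x_1+1)$; for $n\ge2$, $v_n=x_1\cdots x_n(x_1+x_2)$. *)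

theory Defs
  imports Main "HOL-Library.Numeral_Type"
begin

text \<open>An operation of arity n on Z_8 is a pair (n, f) where f :: (nat => 8) => 8
depends only on the arguments 0, ..., n-1 (x_1, ..., x_n of the paper are x 0, ..., x (n-1)).\<close>

type_synonym z8 = "8"
type_synonym op8 = "nat \<times> ((nat \<Rightarrow> z8) \<Rightarrow> z8)"

inductive_set clone_gen :: "op8 set \<Rightarrow> op8 set" for F :: "op8 set" where
  gen: "p \<in> F \<Longrightarrow> p \<in> clone_gen F"
| proj: "i < n \<Longrightarrow> (n, \<lambda>x. x i) \<in> clone_gen F"
| comp: "(m, f) \<in> clone_gen F \<Longrightarrow> (\<forall>i<m. (n, g i) \<in> clone_gen F)
          \<Longrightarrow> (n, \<lambda>x. f (\<lambda>i. g i x)) \<in> clone_gen F"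

definition clone_join :: "op8 set \<Rightarrow> op8 set \<Rightarrow> op8 set" where
  "clone_join A B = clone_gen (A \<union> B)"

definition add_op :: op8 where
  "add_op = (2, \<lambda>x. x 0 + x 1)"

definition const_ops :: "op8 set" where
  "const_ops = {(1, \<lambda>x. c) | c. True}"

definition C :: "op8 \<Rightarrow> op8 set" where
  "C p = clone_gen ({p, add_op} \<union> const_ops)"

definition prodx :: "nat \<Rightarrow> (nat \<Rightarrow> z8) \<Rightarrow> z8" where
  "prodx n x = (\<Prod>i<n. x i)"

definition sumx :: "nat \<Rightarrow> (nat \<Rightarrow> z8) \<Rightarrow> z8" where
  "sumx n x = (\<Sum>i<n. x i)"

definition r_op :: "nat \<Rightarrow> (nat \<Rightarrow> z8) \<Rightarrow> z8" where
  "r_op n x = prodx n x"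

definition t_op :: "nat \<Rightarrow> (nat \<Rightarrow> z8) \<Rightarrow> z8" where
  "t_op n x = (if even n then prodx n x * sumx n x else prodx n x * (sumx n x + 1))"

definition s_op :: "nat \<Rightarrow> (nat \<Rightarrow> z8) \<Rightarrow> z8" where
  "s_op n x = (if odd n then prodx n x * sumx n x else prodx n x * (sumx n x + 1))"

definition p_op :: "nat \<Rightarrow> (nat \<Rightarrow> z8) \<Rightarrow> z8" where
  "p_op n x = (x 0)\<^sup>2 * (\<Prod>i\<in>{1..<n}. x i)"

definition u_op :: "nat \<Rightarrow> (nat \<Rightarrow> z8) \<Rightarrow> z8" where
  "u_op n x = prodx n x * (x 0 + 1)"

definition v_op :: "nat \<Rightarrow> (nat \<Rightarrow> z8) \<Rightarrow> z8" where
  "v_op n x = prodx n x * (x 0 + x 1)"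

definition twice :: "nat \<Rightarrow> ((nat \<Rightarrow> z8) \<Rightarrow> z8) \<Rightarrow> op8" where
  "twice n g = (n, \<lambda>x. 2 * g x)"

end

theory Submission
  imports Defs "HOL-Combinatorics.Permutations"
begin

text \<open>Write \<open>prod_affine n A c\<close> as \<open>P(A, c) = 2 x\<^sub>1\<cdots>x\<^sub>n (\<Sum>i\<in>A. x\<^sub>i + c)\<close>, so that \<open>f = P(K, c)\<close>.
Modulo the clone, \<open>P(A, c)\<close> depends on \<open>A\<close> only through \<open>|A|\<close>, since permuting
variables moves \<open>A\<close> around. For \<open>j \<in> A\<close> and \<open>l \<notin> A\<close>, subtracting from \<open>P(A, c)\<close> its
copy with \<open>x\<^sub>j\<close> and \<open>x\<^sub>l\<close> exchanged leaves \<open>2 x\<^sub>1\<cdots>x\<^sub>n (x\<^sub>j - x\<^sub>l)\<close>, and substituting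
\<open>x\<^sub>j + x\<^sub>l\<close> for \<open>x\<^sub>j\<close> turns this into \<open>P({j, l}, 0)\<close>, a relabelled \<open>2v\<^sub>n\<close>. As \<open>P\<close> is
additive over disjoint unions, pairs generate \<open>P(B, 0)\<close> for every \<open>B\<close> of even size.
Hence for even \<open>|K|\<close> the clone \<open>C(f)\<close> is generated by \<open>2v\<^sub>n\<close> and \<open>P(\<emptyset>, c) = 2c r\<^sub>n\<close>,
and for odd \<open>|K|\<close> by \<open>P({1}, c)\<close>, which is \<open>2u\<^sub>n\<close> or \<open>2p\<^sub>n\<close>.\<close>

lemma clone_gen_cong:
  assumes "(n, g) \<in> clone_gen F" and "\<And>x. g x = h x"
  shows "(n, h) \<in> clone_gen F"
proof -
  have "g = h" using assms(2) by (rule ext)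
  with assms(1) show ?thesis by simp
qed

lemma clone_gen_subset_iff: "clone_gen G \<subseteq> clone_gen F \<longleftrightarrow> G \<subseteq> clone_gen F"
proof
  assume G: "G \<subseteq> clone_gen F"
  show "clone_gen G \<subseteq> clone_gen F"
  proof
    fix p assume "p \<in> clone_gen G"
    then show "p \<in> clone_gen F"
      by induction (use G in \<open>auto intro: clone_gen.proj clone_gen.comp\<close>)
  qed
qed (auto intro: clone_gen.gen)

lemma clone_gen_reindex:
  assumes "(n, g) \<in> clone_gen F" and "\<forall>i<n. \<pi> i < m"
  shows "(m, \<lambda>x. g (x \<circ> \<pi>)) \<in> clone_gen F"
proof -
  have "(m, \<lambda>x. g (\<lambda>i. (\<lambda>x. x (\<pi> i)) x)) \<in> clone_gen F"
    using assms by (auto intro!: clone_gen.comp[OF assms(1)] clone_gen.proj)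
  then show ?thesis by (simp add: comp_def)
qed

lemma clone_gen_add:
  assumes "add_op \<in> F" and "(n, g) \<in> clone_gen F" and "(n, h) \<in> clone_gen F"
  shows "(n, \<lambda>x. g x + h x) \<in> clone_gen F"
proof -
  have plus: "(2, \<lambda>y. y 0 + y 1) \<in> clone_gen F"
    using assms(1) unfolding add_op_def by (rule clone_gen.gen)
  have "(n, \<lambda>x. (\<lambda>y. y 0 + y 1) (\<lambda>i. (if i = (0::nat) then g else h) x)) \<in> clone_gen F"
    by (rule clone_gen.comp[OF plus]) (use assms(2,3) in auto)
  then show ?thesis by simp
qed

lemma clone_gen_const:
  assumes "const_ops \<subseteq> F" and "0 < n"
  shows "(n, \<lambda>x. c) \<in> clone_gen F"
proof -
  have "(1, \<lambda>y. c) \<in> clone_gen F"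
    using assms(1) unfolding const_ops_def by (auto intro: clone_gen.gen)
  then have "(n, \<lambda>x. (\<lambda>y. c) (\<lambda>i. x 0)) \<in> clone_gen F"
    by (rule clone_gen.comp) (use assms(2) in \<open>auto intro: clone_gen.proj\<close>)
  then show ?thesis by simp
qed

lemma clone_gen_of_nat_mult:
  assumes "add_op \<in> F" and "const_ops \<subseteq> F" and "0 < n" and "(n, g) \<in> clone_gen F"
  shows "(n, \<lambda>x. of_nat k * g x) \<in> clone_gen F"
proof (induction k)
  case 0
  show ?case using clone_gen_const[OF assms(2,3), of 0] by simp
next
  case (Suc k)
  from clone_gen_add[OF assms(1,4) Suc.IH] show ?case
    by (rule clone_gen_cong) (simp add: algebra_simps)
qed

lemma clone_gen_diff:
  assumes "add_op \<in> F" and "const_ops \<subseteq> F" and "0 < n"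
    and "(n, g) \<in> clone_gen F" and "(n, h) \<in> clone_gen F"
  shows "(n, \<lambda>x. g x - h x) \<in> clone_gen F"
proof -
  have "(n, \<lambda>x. g x + of_nat 7 * h x) \<in> clone_gen F"
    using assms by (intro clone_gen_add clone_gen_of_nat_mult)
  moreover have minus_one: "(of_nat 7 :: z8) = - 1" by simp
  have "g x + of_nat 7 * h x = g x - h x" for x by (simp only: minus_one) simp
  ultimately show ?thesis by (rule clone_gen_cong)
qed

lemma clone_gen_subst_add:
  assumes "add_op \<in> F" and "(n, g) \<in> clone_gen F" and "j < n" and "l < n"
  shows "(n, \<lambda>x. g (x(j := x j + x l))) \<in> clone_gen F"
proof -
  have sum: "(n, \<lambda>x. x j + x l) \<in> clone_gen F"
    using assms by (intro clone_gen_add clone_gen.proj)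
  have "(n, \<lambda>x. g (\<lambda>i. (\<lambda>x. if i = j then x j + x l else x i) x)) \<in> clone_gen F"
  proof (rule clone_gen.comp[OF assms(2)], intro allI impI)
    fix i assume "i < n"
    with sum show "(n, \<lambda>x. if i = j then x j + x l else x i) \<in> clone_gen F"
      by (cases "i = j") (auto intro: clone_gen.proj)
  qed
  then show ?thesis by (simp add: fun_upd_def)
qed

lemma C_subset_clone_gen_iff:
  assumes "add_op \<in> F" and "const_ops \<subseteq> F"
  shows "C p \<subseteq> clone_gen F \<longleftrightarrow> p \<in> clone_gen F"
  using assms unfolding C_def clone_gen_subset_iff by (auto intro: clone_gen.gen)

lemma C_subset_iff: "C p \<subseteq> C q \<longleftrightarrow> p \<in> C q"
  unfolding C_def[of q] by (rule C_subset_clone_gen_iff) auto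

lemma clone_join_C: "clone_join (C p) (C q) = clone_gen ({p, q, add_op} \<union> const_ops)"
proof -
  define G where "G = {p, q, add_op} \<union> const_ops"
  have "G \<subseteq> clone_gen G"
    using clone_gen.gen by blast
  then have "add_op \<in> G" "const_ops \<subseteq> G" "p \<in> clone_gen G" "q \<in> clone_gen G"
    unfolding G_def by auto
  then have "C p \<union> C q \<subseteq> clone_gen G"
    using C_subset_clone_gen_iff by blast
  then have "clone_gen (C p \<union> C q) \<subseteq> clone_gen G"
    by (rule clone_gen_subset_iff[THEN iffD2])
  moreover have "G \<subseteq> C p \<union> C q"
    unfolding C_def G_def by (auto intro: clone_gen.gen)
  then have "clone_gen G \<subseteq> clone_gen (C p \<union> C q)"
    by (meson clone_gen.gen clone_gen_subset_iff subset_iff)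
  ultimately show ?thesis
    unfolding clone_join_def G_def[symmetric] by (rule order_antisym)
qed

lemma exists_permutes_image:
  assumes "finite S" and "A \<subseteq> S" and "B \<subseteq> S" and "card A = card B"
  obtains \<pi> where "\<pi> permutes S" and "\<pi> ` A = B"
proof -
  have fin: "finite A" "finite B" "finite (S - A)" "finite (S - B)"
    using assms finite_subset by blast+
  obtain g where g: "bij_betw g A B"
    using finite_same_card_bij[OF fin(1,2) assms(4)] by blast
  have "card (S - A) = card (S - B)"
    using assms by (simp add: card_Diff_subset fin)
  then obtain h where h: "bij_betw h (S - A) (S - B)"
    using finite_same_card_bij[OF fin(3,4)] by blast
  define \<pi> where "\<pi> x = (if x \<in> A then g x else if x \<in> S then h x else x)" for x
  have "bij_betw (\<lambda>x. if x \<in> A then g x else h x) (A \<union> (S - A)) (B \<union> (S - B))"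
    by (rule bij_betw_disjoint_Un[OF g h]) auto
  moreover have "A \<union> (S - A) = S" "B \<union> (S - B) = S"
    using assms(2,3) by auto
  moreover have "\<pi> x = (if x \<in> A then g x else h x)" if "x \<in> S" for x
    using that by (simp add: \<pi>_def)
  ultimately have "bij_betw \<pi> S S"
    using bij_betw_cong[of S \<pi> "\<lambda>x. if x \<in> A then g x else h x" S] by simp
  then have "\<pi> permutes S"
    by (rule bij_imp_permutes) (use assms(2) in \<open>auto simp: \<pi>_def\<close>)
  moreover have "\<pi> ` A = B"
    using g by (auto simp: \<pi>_def bij_betw_def)
  ultimately show thesis by (rule that)
qed

definition prod_affine :: "nat \<Rightarrow> nat set \<Rightarrow> z8 \<Rightarrow> (nat \<Rightarrow> z8) \<Rightarrow> z8" where
  "prod_affine n A c x = 2 * prodx n x * ((\<Sum>i\<in>A. x i) + c)"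

lemma prod_affine_permute:
  assumes "\<pi> permutes {..<n}"
  shows "prod_affine n A c (x \<circ> \<pi>) = prod_affine n (\<pi> ` A) c x"
proof -
  have "prodx n (x \<circ> \<pi>) = prodx n x"
    unfolding prodx_def by (rule prod.permute[OF assms, symmetric])
  moreover have "(\<Sum>i\<in>\<pi> ` A. x i) = (\<Sum>i\<in>A. x (\<pi> i))"
    using permutes_inj[OF assms] by (simp add: sum.reindex inj_on_subset)
  ultimately show ?thesis
    unfolding prod_affine_def by simp
qed

lemma prod_affine_union:
  assumes "finite A" and "finite B" and "A \<inter> B = {}"
  shows "prod_affine n A c x + prod_affine n B d x = prod_affine n (A \<union> B) (c + d) x"
  using assms unfolding prod_affine_def by (simp add: sum.union_disjoint algebra_simps)

lemma prodx_update_mult: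
  assumes "j < n"
  shows "prodx n (x(j := v)) * x j = prodx n x * v"
proof -
  have "prodx n y = y j * (\<Prod>i\<in>{..<n} - {j}. y i)" for y
    unfolding prodx_def using assms by (simp add: prod.remove)
  moreover have "(\<Prod>i\<in>{..<n} - {j}. (x(j := v)) i) = (\<Prod>i\<in>{..<n} - {j}. x i)"
    by (rule prod.cong) auto
  ultimately show ?thesis by simp
qed

lemma clone_gen_prod_affine_permute:
  assumes "(n, prod_affine n A c) \<in> clone_gen F" and "\<pi> permutes {..<n}"
  shows "(n, prod_affine n (\<pi> ` A) c) \<in> clone_gen F"
proof -
  have "(n, \<lambda>x. prod_affine n A c (x \<circ> \<pi>)) \<in> clone_gen F"
    by (rule clone_gen_reindex[OF assms(1)]) (use assms(2) in \<open>metis lessThan_iff permutes_in_image\<close>)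
  then show ?thesis by (simp add: prod_affine_permute[OF assms(2)])
qed

lemma clone_gen_prod_affine_card:
  assumes "(n, prod_affine n A c) \<in> clone_gen F"
    and "A \<subseteq> {..<n}" and "B \<subseteq> {..<n}" and "card A = card B"
  shows "(n, prod_affine n B c) \<in> clone_gen F"
proof -
  obtain \<pi> where "\<pi> permutes {..<n}" and "\<pi> ` A = B"
    using exists_permutes_image[OF _ assms(2-4)] by blast
  with clone_gen_prod_affine_permute[OF assms(1)] show ?thesis by blast
qed

lemma two_le_if_nonempty_proper:
  fixes n :: nat
  assumes "A \<subseteq> {..<n}" and "A \<noteq> {}" and "A \<noteq> {..<n}"
  shows "2 \<le> n"
proof -
  obtain j l where "j \<in> A" "l < n" "l \<notin> A"
    using assms by blast
  with assms(1) have "card {j, l} \<le> card {..<n}"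
    by (intro card_mono) auto
  with \<open>j \<in> A\<close> \<open>l \<notin> A\<close> show ?thesis by (cases "j = l") auto
qed

context
  fixes F :: "op8 set"
  assumes add_in: "add_op \<in> F" and consts_in: "const_ops \<subseteq> F"
begin

lemma clone_gen_prod_affine_union:
  assumes "(n, prod_affine n A c) \<in> clone_gen F" and "(n, prod_affine n B d) \<in> clone_gen F"
    and "finite A" and "finite B" and "A \<inter> B = {}"
  shows "(n, prod_affine n (A \<union> B) (c + d)) \<in> clone_gen F"
  using clone_gen_add[OF add_in assms(1,2)] by (rule clone_gen_cong) (simp add: prod_affine_union assms)

lemma clone_gen_prod_affine_diff:
  assumes "0 < n"
    and "(n, prod_affine n (A \<union> B) (c + d)) \<in> clone_gen F" and "(n, prod_affine n B d) \<in> clone_gen F"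
    and "finite A" and "finite B" and "A \<inter> B = {}"
  shows "(n, prod_affine n A c) \<in> clone_gen F"
  using clone_gen_diff[OF add_in consts_in assms(1-3)]
  by (rule clone_gen_cong) (simp add: prod_affine_union[symmetric] assms)

lemma clone_gen_prod_affine_pair:
  assumes "(n, prod_affine n A c) \<in> clone_gen F" and "finite A"
    and "j \<in> A" and "j < n" and "l < n" and "l \<notin> A"
  shows "(n, prod_affine n {j, l} 0) \<in> clone_gen F"
proof -
  let ?\<tau> = "transpose j l"
  have swapped: "(n, prod_affine n (?\<tau> ` A) c) \<in> clone_gen F"
    using assms by (auto intro!: clone_gen_prod_affine_permute[OF assms(1)] permutes_swap_id)
  have "(n, \<lambda>x. prod_affine n A c x - prod_affine n (?\<tau> ` A) c x) \<in> clone_gen F"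
    by (rule clone_gen_diff[OF add_in consts_in _ assms(1) swapped]) (use assms(4) in auto)
  moreover have "prod_affine n A c x - prod_affine n (?\<tau> ` A) c x = 2 * prodx n x * (x j - x l)" for x
  proof -
    have "?\<tau> ` A = insert l (A - {j})"
      using assms(3,6) by (auto simp: transpose_def)
    with assms(2,3,6) show ?thesis
      unfolding prod_affine_def by (simp add: sum.remove algebra_simps)
  qed
  ultimately have "(n, \<lambda>x. 2 * prodx n x * (x j - x l)) \<in> clone_gen F"
    by (rule clone_gen_cong)
  note substituted = clone_gen_subst_add[OF add_in this assms(4,5)]
  have "2 * prodx n (x(j := x j + x l)) * ((x(j := x j + x l)) j - (x(j := x j + x l)) l)
      = prod_affine n {j, l} 0 x" for x
  proof -
    have "j \<noteq> l" using assms(3,6) by auto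
    then have "2 * prodx n (x(j := x j + x l)) * ((x(j := x j + x l)) j - (x(j := x j + x l)) l)
        = 2 * (prodx n (x(j := x j + x l)) * x j)"
      by (simp add: mult.assoc)
    with \<open>j \<noteq> l\<close> show ?thesis
      by (simp add: prodx_update_mult[OF assms(4)] prod_affine_def mult.assoc)
  qed
  with substituted show ?thesis by (rule clone_gen_cong)
qed

lemma clone_gen_prod_affine_0_1:
  assumes "(n, prod_affine n A c) \<in> clone_gen F"
    and "A \<subseteq> {..<n}" and "A \<noteq> {}" and "A \<noteq> {..<n}"
  shows "(n, prod_affine n {0, 1} 0) \<in> clone_gen F"
proof -
  obtain j l where jl: "j \<in> A" "l < n" "l \<notin> A"
    using assms(2-4) by blast
  have "finite A" "j \<noteq> l" using assms(2) jl finite_subset by auto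
  with jl assms(2) have pair: "(n, prod_affine n {j, l} 0) \<in> clone_gen F"
    by (intro clone_gen_prod_affine_pair[OF assms(1)]) auto
  have "2 \<le> n" by (rule two_le_if_nonempty_proper[OF assms(2-4)])
  then show ?thesis
    using jl \<open>j \<noteq> l\<close> assms(2) by (intro clone_gen_prod_affine_card[OF pair]) auto
qed

lemma clone_gen_prod_affine_even:
  assumes V: "(n, prod_affine n {0, 1} 0) \<in> clone_gen F" and "2 \<le> n"
    and "B \<subseteq> {..<n}" and "even (card B)"
  shows "(n, prod_affine n B 0) \<in> clone_gen F"
  using assms(3,4)
proof (induction "card B" arbitrary: B rule: less_induct)
  case less
  have fin: "finite B" using less.prems(1) finite_subset by blast
  show ?case
  proof (cases "B = {}")
    case True
    have "(n, \<lambda>x. 0) \<in> clone_gen F"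
      using \<open>2 \<le> n\<close> by (intro clone_gen_const[OF consts_in]) auto
    then show ?thesis by (rule clone_gen_cong) (simp add: True prod_affine_def)
  next
    case False
    with fin have "card B \<noteq> 0" by simp
    with less.prems(2) have "2 \<le> card B" by presburger
    then obtain P where P: "P \<subseteq> B" "card P = 2"
      by (rule obtain_subset_with_card_n)
    have rest: "(n, prod_affine n (B - P) 0) \<in> clone_gen F"
      using P \<open>2 \<le> card B\<close> fin less.prems by (intro less.hyps) (auto simp: card_Diff_subset finite_subset)
    have pair: "(n, prod_affine n P 0) \<in> clone_gen F"
      by (rule clone_gen_prod_affine_card[OF V]) (use P less.prems(1) \<open>2 \<le> n\<close> in auto)
    have "(n, prod_affine n (P \<union> (B - P)) (0 + 0)) \<in> clone_gen F"
      by (rule clone_gen_prod_affine_union[OF pair rest]) (use P fin in \<open>auto intro: finite_subset\<close>)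
    with P(1) show ?thesis by (simp add: Un_absorb1)
  qed
qed

end

lemma C_generators:
  "add_op \<in> {p, add_op} \<union> const_ops" "const_ops \<subseteq> {p, add_op} \<union> const_ops"
  "p \<in> clone_gen ({p, add_op} \<union> const_ops)"
  by (auto intro: clone_gen.gen)

lemma prod_affine_0_1_in_C:
  assumes "K \<subseteq> {..<n}" and "K \<noteq> {}" and "K \<noteq> {..<n}"
  shows "(n, prod_affine n {0, 1} 0) \<in> C (n, prod_affine n K c)"
  unfolding C_def by (rule clone_gen_prod_affine_0_1[OF C_generators assms])

lemma C_prod_affine_even:
  assumes "K \<subseteq> {..<n}" and "K \<noteq> {}" and "K \<noteq> {..<n}" and "even (card K)"
  shows "C (n, prod_affine n K 0) = C (n, prod_affine n {0, 1} 0)"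
proof -
  have "2 \<le> n" by (rule two_le_if_nonempty_proper[OF assms(1-3)])
  have "(n, prod_affine n K 0) \<in> C (n, prod_affine n {0, 1} 0)"
    unfolding C_def by (rule clone_gen_prod_affine_even[OF C_generators \<open>2 \<le> n\<close> assms(1,4)])
  with prod_affine_0_1_in_C[OF assms(1-3)] show ?thesis
    by (metis C_subset_iff order_antisym)
qed

lemma C_prod_affine_even_join:
  assumes "K \<subseteq> {..<n}" and "K \<noteq> {}" and "K \<noteq> {..<n}" and "even (card K)"
  shows "C (n, prod_affine n K c)
    = clone_join (C (n, prod_affine n {0, 1} 0)) (C (n, prod_affine n {} c))"
proof -
  have "2 \<le> n" by (rule two_le_if_nonempty_proper[OF assms(1-3)])
  have fin: "finite K" using assms(1) finite_subset by blast
  define G where "G = {(n, prod_affine n {0, 1} 0), (n, prod_affine n {} c), add_op} \<union> const_ops"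
  have G: "add_op \<in> G" "const_ops \<subseteq> G"
    "(n, prod_affine n {0, 1} 0) \<in> clone_gen G" "(n, prod_affine n {} c) \<in> clone_gen G"
    unfolding G_def by (auto intro: clone_gen.gen)
  have "(n, prod_affine n K 0) \<in> clone_gen G"
    by (rule clone_gen_prod_affine_even[OF G(1-3) \<open>2 \<le> n\<close> assms(1,4)])
  then have "(n, prod_affine n (K \<union> {}) (0 + c)) \<in> clone_gen G"
    by (rule clone_gen_prod_affine_union[OF G(1,2) _ G(4)]) (use fin in auto)
  then have "C (n, prod_affine n K c) \<subseteq> clone_gen G"
    using C_subset_clone_gen_iff[OF G(1,2)] by simp
  moreover have "clone_gen G \<subseteq> C (n, prod_affine n K c)"
  proof -
    define F where "F = {(n, prod_affine n K c), add_op} \<union> const_ops"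
    have F: "add_op \<in> F" "const_ops \<subseteq> F" "(n, prod_affine n ({} \<union> K) (c + 0)) \<in> clone_gen F"
      unfolding F_def by (auto intro: clone_gen.gen)
    have V: "(n, prod_affine n {0, 1} 0) \<in> clone_gen F"
      using prod_affine_0_1_in_C[OF assms(1-3)] unfolding C_def F_def .
    have K0: "(n, prod_affine n K 0) \<in> clone_gen F"
      by (rule clone_gen_prod_affine_even[OF F(1,2) V \<open>2 \<le> n\<close> assms(1,4)])
    have "(n, prod_affine n {} c) \<in> clone_gen F"
      by (rule clone_gen_prod_affine_diff[OF F(1,2) _ F(3) K0]) (use fin \<open>2 \<le> n\<close> in auto)
    with V F(1,2) have "G \<subseteq> clone_gen F"
      unfolding G_def using clone_gen.gen by blast
    then show ?thesis
      unfolding C_def F_def[symmetric] by (rule clone_gen_subset_iff[THEN iffD2])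
  qed
  ultimately show ?thesis
    unfolding clone_join_C G_def[symmetric] by (rule order_antisym)
qed

lemma C_prod_affine_odd:
  assumes "K \<subseteq> {..<n}" and "K \<noteq> {..<n}" and "odd (card K)"
  shows "C (n, prod_affine n K c) = C (n, prod_affine n {0} c)"
proof -
  have "K \<noteq> {}" using assms(3) by auto
  have "2 \<le> n" by (rule two_le_if_nonempty_proper[OF assms(1) \<open>K \<noteq> {}\<close> assms(2)])
  have fin: "finite K" using assms(1) finite_subset by blast
  obtain a where a: "a \<in> K" using \<open>K \<noteq> {}\<close> by blast
  have even_rest: "even (card (K - {a}))"
    using assms(3) a fin by (simp add: card_Diff_singleton)
  have rest: "K - {a} \<subseteq> {..<n}" and "a < n" using assms(1) a by auto
  have split: "{a} \<union> (K - {a}) = K" using a by auto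
  have "(n, prod_affine n {0} c) \<in> C (n, prod_affine n K c)"
  proof -
    define F where "F = {(n, prod_affine n K c), add_op} \<union> const_ops"
    have F: "add_op \<in> F" "const_ops \<subseteq> F" "(n, prod_affine n ({a} \<union> (K - {a})) (c + 0)) \<in> clone_gen F"
      unfolding F_def split by (auto intro: clone_gen.gen)
    have V: "(n, prod_affine n {0, 1} 0) \<in> clone_gen F"
      using prod_affine_0_1_in_C[OF assms(1) \<open>K \<noteq> {}\<close> assms(2)] unfolding C_def F_def .
    have "(n, prod_affine n (K - {a}) 0) \<in> clone_gen F"
      by (rule clone_gen_prod_affine_even[OF F(1,2) V \<open>2 \<le> n\<close> rest even_rest])
    then have "(n, prod_affine n {a} c) \<in> clone_gen F"
      by (intro clone_gen_prod_affine_diff[OF F(1,2) _ F(3)]) (use fin \<open>2 \<le> n\<close> in auto)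
    then show ?thesis
      unfolding C_def F_def[symmetric] by (rule clone_gen_prod_affine_card) (use \<open>a < n\<close> \<open>2 \<le> n\<close> in auto)
  qed
  moreover have "(n, prod_affine n K c) \<in> C (n, prod_affine n {0} c)"
  proof -
    define F where "F = {(n, prod_affine n {0} c), add_op} \<union> const_ops"
    have F: "add_op \<in> F" "const_ops \<subseteq> F" "(n, prod_affine n {0} c) \<in> clone_gen F"
      unfolding F_def by (auto intro: clone_gen.gen)
    have "1 \<in> {..<n}" using \<open>2 \<le> n\<close> by simp
    then have "{0} \<noteq> {..<n}" by auto
    then have V: "(n, prod_affine n {0, 1} 0) \<in> clone_gen F"
      using prod_affine_0_1_in_C[of "{0}" n c] \<open>2 \<le> n\<close> unfolding C_def F_def by simp
    have "(n, prod_affine n (K - {a}) 0) \<in> clone_gen F"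
      by (rule clone_gen_prod_affine_even[OF F(1,2) V \<open>2 \<le> n\<close> rest even_rest])
    moreover have "(n, prod_affine n {a} c) \<in> clone_gen F"
      by (rule clone_gen_prod_affine_card[OF F(3)]) (use \<open>a < n\<close> \<open>2 \<le> n\<close> in auto)
    ultimately have "(n, prod_affine n ({a} \<union> (K - {a})) (c + 0)) \<in> clone_gen F"
      using fin by (intro clone_gen_prod_affine_union[OF F(1,2)]) auto
    then show ?thesis
      unfolding C_def F_def[symmetric] split by simp
  qed
  ultimately show ?thesis
    by (metis C_subset_iff order_antisym)
qed

lemma twice_v_op: "twice n (v_op n) = (n, prod_affine n {0, 1} 0)"
  unfolding twice_def v_op_def prod_affine_def by (simp add: fun_eq_iff algebra_simps)

lemma twice_r_op: "twice n (r_op n) = (n, prod_affine n {} 1)"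
  unfolding twice_def r_op_def prod_affine_def by (simp add: fun_eq_iff)

lemma twice_u_op: "twice n (u_op n) = (n, prod_affine n {0} 1)"
  unfolding twice_def u_op_def prod_affine_def by (simp add: fun_eq_iff algebra_simps)

lemma twice_p_op:
  assumes "0 < n"
  shows "twice n (p_op n) = (n, prod_affine n {0} 0)"
proof -
  have "{..<n} = insert 0 {1..<n}" using assms by auto
  then have "(x 0)\<^sup>2 * (\<Prod>i\<in>{1..<n}. x i) = prodx n x * x 0" for x :: "nat \<Rightarrow> z8"
    unfolding prodx_def by (simp add: power2_eq_square algebra_simps)
  then show ?thesis
    unfolding twice_def p_op_def prod_affine_def by (simp add: fun_eq_iff mult.assoc)
qed

lemma prod_affine_full_eq_t_or_s:
  assumes "c \<in> {0, 1}"
  shows "(n, prod_affine n {..<n} c) = twice n (t_op n) \<or> (n, prod_affine n {..<n} c) = twice n (s_op n)"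
  using assms unfolding twice_def t_op_def s_op_def prod_affine_def sumx_def
  by (cases "even n") (auto simp: fun_eq_iff mult.assoc)

theorem theorem4p2:
  fixes n :: nat and b :: "nat \<Rightarrow> z8" and c :: z8 and f :: "(nat \<Rightarrow> z8) \<Rightarrow> z8"
    and K :: "nat set"
  assumes n: "n \<ge> 1"
    and b01: "\<forall>i<n. b i \<in> {0, 1}"
    and c01: "c \<in> {0, 1}"
    and bj: "\<exists>j<n. b j = 1"
    and f_def: "f = (\<lambda>x. 2 * prodx n x * ((\<Sum>i<n. b i * x i) + c))"
    and K_def: "K = {j. j < n \<and> b j = 1}"
  shows "(K = {..<n} \<longrightarrow> (n, f) = twice n (t_op n) \<or> (n, f) = twice n (s_op n))
    \<and> (1 \<le> card K \<and> card K < n \<longrightarrow> twice n (v_op n) \<in> C (n, f))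
    \<and> (1 \<le> card K \<and> card K < n \<and> even (card K) \<longrightarrow>
         C (n, f) = C (twice n (v_op n))
         \<or> C (n, f) = clone_join (C (twice n (v_op n))) (C (twice n (r_op n))))
    \<and> (1 \<le> card K \<and> card K < n \<and> odd (card K) \<longrightarrow>
         C (n, f) = C (twice n (u_op n)) \<or> C (n, f) = C (twice n (p_op n)))"
proof -
  have K: "K \<subseteq> {..<n}" unfolding K_def by auto
  have "(\<Sum>i<n. b i * x i) = (\<Sum>i\<in>K. x i)" for x
  proof -
    have "(\<Sum>i<n. b i * x i) = (\<Sum>i<n. if i \<in> K then x i else 0)"
      by (rule sum.cong) (use b01 in \<open>auto simp: K_def\<close>)
    also have "\<dots> = (\<Sum>i\<in>K. x i)"
      using K by (simp add: sum.inter_restrict[symmetric] Int_absorb1)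
    finally show ?thesis .
  qed
  then have f: "f = prod_affine n K c"
    unfolding f_def prod_affine_def by simp
  have proper: "K \<noteq> {}" "K \<noteq> {..<n}" if "1 \<le> card K \<and> card K < n"
    using that by auto
  have c: "c = 0 \<or> c = 1" using c01 by simp
  have "0 < n" using n by simp
  show ?thesis
    unfolding f twice_v_op twice_r_op twice_u_op twice_p_op[OF \<open>0 < n\<close>]
    using prod_affine_full_eq_t_or_s[OF c01] prod_affine_0_1_in_C[OF K proper]
      C_prod_affine_even[OF K proper] C_prod_affine_even_join[OF K proper]
      C_prod_affine_odd[OF K proper(2)] c
    by auto
qed

end
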